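(* Let $0=x_1<x_2<\dots<x_{K+1}=L$, and for each element $e^k=[x_k,x_{k+1}]$ let $\rho,\mu$ be smooth positive functions on $e^k$ (possibly discontinuous across element interfaces), $Z_s=\sqrt{\rho\mu}$. Let $v,\sigma$ be functions that are smooth on each $e^k\times[0,\infty)$, possibly two-valued at interior nodes; denote by a superscript $k$ and arguments $x_k^+$, $x_{k+1}^-$ the one-sided traces taken from element $e^k$. Fix $r_0,r_L\in[-1,1]$ and, for each interior node $x_k$ ($2\le k\le K$), a frictional strength $\alpha_k\in[0,\infty]$. Define boundary/interface data ("hat-variables") as follows. (i) At $x_1=0$: $p_0=\frac12(Z_s(x_1^+)v(x_1^+)+\sigma(x_1^+))$, $\widehat v(x_1^+)=\frac{1+r_0}{Z_s(x_1^+)}p_0$, $\widehat\sigma(x_1^+)=(1-r_0)p_0$. (ii) At $x_{K+1}=L$: $q_L=\frac12(Z_s(x_{K+1}^-)v(x_{K+1}^-)-\sigma(x_{K+1}^-))$, $\widehat v(x_{K+1}^-)=\frac{1+r_L}{Z_s(x_{K+1}^-)}q_L$, $\widehat\sigma(x_{K+1}^-)=-(1-r_L)q_L$. (iii) At an interior node $x_k$: with $Z^-=Z_s(x_k^-)$, $Z^+=Z_s(x_k^+)$, $q^-=\frac12(Z^-v(x_k^-)-\sigma(x_k^-))$, $p^+=\frac12(Z^+v(x_k^+)+\sigma(x_k^+))$, $\eta_k=\frac{Z^-Z^+}{Z^-+Z^+}$, $\Phi_k=\eta_k(\frac{2}{Z^+}p^+-\frac{2}{Z^-}q^-)$, set $\widehat\sigma_k=\frac{\alpha_k}{\eta_k+\alpha_k}\Phi_k$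 (and $\widehat\sigma_k=\Phi_k$ if $\alpha_k=\infty$), $\widehat\sigma(x_k^\pm)=\widehat\sigma_k$, $\widehat v(x_k^-)=\frac{2q^-+\widehat\sigma_k}{Z^-}$, $\widehat v(x_k^+)=\frac{2p^+-\widehat\sigma_k}{Z^+}$. Define the flux fluctuations $$F(x_k,t)=\tfrac{Z_s(x_k^+)}{2}\big(v(x_k^+)-\widehat v(x_k^+)\big)-\tfrac12\big(\sigma(x_k^+)-\widehat\sigma(x_k^+)\big),$$ $$G(x_{k+1},t)=\tfrac{Z_s(x_{k+1}^-)}{2}\big(v(x_{k+1}^-)-\widehat v(x_{k+1}^-)\big)+\tfrac12\big(\sigma(x_{k+1}^-)-\widehat\sigma(x_{k+1}^-)\big).$$ Suppose that for all test functions $\phi_v,\phi_\sigma$ which are smooth on each element, $$\sum_{k=1}^K\Big(\int_{x_k}^{x_{k+1}}\big(\rho\phi_v\partial_tv-\phi_v\partial_x\sigma\big)dx+\phi_v(x_k^+)F(x_k,t)+\phi_v(x_{k+1}^-)G(x_{k+1},t)\Big)=0,$$ $$\sum_{k=1}^K\Big(\int_{x_k}^{x_{k+1}}\big(\tfrac1\mu\phi_\sigma\partial_t\sigma-\phi_\sigma\partial_xv\big)dx-\frac{\phi_\sigma(x_k^+)}{Z_s(x_k^+)}F(x_k,t)+\frac{\phi_\sigma(x_{k+1}^-)}{Z_s(x_{k+1}^-)}G(x_{k+1},t)\Big)=0.$$ Then, with $E(t)=\sum_{k=1}^K\frac12\int_{x_k}^{x_{k+1}}\big(\rho v^2+\frac1\mu\sigma^2\big)dx$,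 $$\frac{dE}{dt}=-\sum_{k=1}^K\Big(\frac{|F(x_k,t)|^2}{Z_s(x_k^+)}+\frac{|G(x_{k+1},t)|^2}{Z_s(x_{k+1}^-)}\Big)-\sum_{k=2}^K\frac{\alpha_k}{(\eta_k+\alpha_k)^2}\Phi_k^2-\frac{1-r_0^2}{Z_s(x_1^+)}p_0^2-\frac{1-r_L^2}{Z_s(x_{K+1}^-)}q_L^2,$$ where the term $\frac{\alpha_k}{(\eta_k+\alpha_k)^2}\Phi_k^2$ is interpreted as $0$ when $\alpha_k=\infty$. In particular $\frac{dE}{dt}\le0$.
   Context: This concerns the 1D elastic wave equation $\rho\partial_tv=\partial_x\sigma$, $\frac1\mu\partial_t\sigma=\partial_xv$ on $[0,L]$ written in a penalized weak form on a partition into elements. $Z_s=\sqrt{\rho\mu}$ is the shear impedance. The interior nodes carry frictional interface conditions (force balance and $\widehat\sigma=\alpha_k[\![\widehat v]\!]$), $\alpha_k=\infty$ meaning a locked (non-slipping) interface; the external boundaries carry the conditions $\frac{Z_s}{2}(1-r)v\mp\frac{1+r}{2}\sigma=0$ with reflection coefficients $r_0,r_L$. *)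

theory Defs
  imports "HOL-Analysis.Analysis" "HOL-Library.Extended_Real"
begin

text \<open>Elements are indexed k = 1..K, element k is the interval
  {x k .. x (Suc k)}. Material parameters rho k, mu k and the fields v k, sigma k
  are the restrictions to element k (so traces from element k are simply
  evaluations of v k at x k resp. x (Suc k)). Fields take arguments (space, time).
  "Smooth" is read as continuously differentiable (C1), with one-sided
  derivatives at the element end points.\<close>

definition C1_on :: "real set \<Rightarrow> (real \<Rightarrow> real) \<Rightarrow> bool" where
  "C1_on S f \<longleftrightarrow> (\<exists>f'. (\<forall>y\<in>S. (f has_real_derivative f' y) (at y within S)) \<and> continuous_on S f')"

definition elem_C1 :: "real \<Rightarrow> real \<Rightarrow> (real \<Rightarrow> real \<Rightarrow> real) \<Rightarrow> (real \<Rightarrow> real \<Rightarrow> real)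
    \<Rightarrow> (real \<Rightarrow> real \<Rightarrow> real) \<Rightarrow> bool" where
  "elem_C1 a b f fx ft \<longleftrightarrow>
     (\<forall>y\<in>{a..b}. \<forall>t\<ge>0.
        ((\<lambda>y'. f y' t) has_real_derivative fx y t) (at y within {a..b}) \<and>
        ((\<lambda>t'. f y t') has_real_derivative ft y t) (at t within {0..})) \<and>
     continuous_on ({a..b} \<times> {0..}) (\<lambda>(y,t). f y t) \<and>
     continuous_on ({a..b} \<times> {0..}) (\<lambda>(y,t). fx y t) \<and>
     continuous_on ({a..b} \<times> {0..}) (\<lambda>(y,t). ft y t)"

definition Zs :: "(nat \<Rightarrow> real \<Rightarrow> real) \<Rightarrow> (nat \<Rightarrow> real \<Rightarrow> real) \<Rightarrow> nat \<Rightarrow> real \<Rightarrow> real" where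
  "Zs \<rho> \<mu> k y = sqrt (\<rho> k y * \<mu> k y)"

definition pplus :: "real \<Rightarrow> real \<Rightarrow> real \<Rightarrow> real" where
  "pplus Z w s = (Z * w + s) / 2"

definition qminus :: "real \<Rightarrow> real \<Rightarrow> real \<Rightarrow> real" where
  "qminus Z w s = (Z * w - s) / 2"

type_synonym field = "nat \<Rightarrow> real \<Rightarrow> real \<Rightarrow> real"
type_synonym coef = "nat \<Rightarrow> real \<Rightarrow> real"

definition p0 :: "(nat \<Rightarrow> real) \<Rightarrow> coef \<Rightarrow> coef \<Rightarrow> field \<Rightarrow> field \<Rightarrow> real \<Rightarrow> real" where
  "p0 x \<rho> \<mu> v \<sigma> t = pplus (Zs \<rho> \<mu> 1 (x 1)) (v 1 (x 1) t) (\<sigma> 1 (x 1) t)"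

definition qL :: "nat \<Rightarrow> (nat \<Rightarrow> real) \<Rightarrow> coef \<Rightarrow> coef \<Rightarrow> field \<Rightarrow> field \<Rightarrow> real \<Rightarrow> real" where
  "qL K x \<rho> \<mu> v \<sigma> t = qminus (Zs \<rho> \<mu> K (x (Suc K))) (v K (x (Suc K)) t) (\<sigma> K (x (Suc K)) t)"

text \<open>Interior node k (2 \<le> k \<le> K): minus side is element k-1, plus side is element k.\<close>
definition qm_node :: "(nat \<Rightarrow> real) \<Rightarrow> coef \<Rightarrow> coef \<Rightarrow> field \<Rightarrow> field \<Rightarrow> nat \<Rightarrow> real \<Rightarrow> real" where
  "qm_node x \<rho> \<mu> v \<sigma> k t = qminus (Zs \<rho> \<mu> (k-1) (x k)) (v (k-1) (x k) t) (\<sigma> (k-1) (x k) t)"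

definition pp_node :: "(nat \<Rightarrow> real) \<Rightarrow> coef \<Rightarrow> coef \<Rightarrow> field \<Rightarrow> field \<Rightarrow> nat \<Rightarrow> real \<Rightarrow> real" where
  "pp_node x \<rho> \<mu> v \<sigma> k t = pplus (Zs \<rho> \<mu> k (x k)) (v k (x k) t) (\<sigma> k (x k) t)"

definition eta_node :: "(nat \<Rightarrow> real) \<Rightarrow> coef \<Rightarrow> coef \<Rightarrow> nat \<Rightarrow> real" where
  "eta_node x \<rho> \<mu> k = Zs \<rho> \<mu> (k-1) (x k) * Zs \<rho> \<mu> k (x k) / (Zs \<rho> \<mu> (k-1) (x k) + Zs \<rho> \<mu> k (x k))"

definition Phi_node :: "(nat \<Rightarrow> real) \<Rightarrow> coef \<Rightarrow> coef \<Rightarrow> field \<Rightarrow> field \<Rightarrow> nat \<Rightarrow> real \<Rightarrow> real" where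
  "Phi_node x \<rho> \<mu> v \<sigma> k t = eta_node x \<rho> \<mu> k *
     (2 / Zs \<rho> \<mu> k (x k) * pp_node x \<rho> \<mu> v \<sigma> k t - 2 / Zs \<rho> \<mu> (k-1) (x k) * qm_node x \<rho> \<mu> v \<sigma> k t)"

text \<open>Frictional strength alpha k in [0, \<infinity>] (ereal); \<infinity> = locked interface.\<close>
definition sighat_node :: "(nat \<Rightarrow> ereal) \<Rightarrow> (nat \<Rightarrow> real) \<Rightarrow> coef \<Rightarrow> coef \<Rightarrow> field \<Rightarrow> field \<Rightarrow> nat \<Rightarrow> real \<Rightarrow> real" where
  "sighat_node \<alpha> x \<rho> \<mu> v \<sigma> k t =
     (if \<alpha> k = \<infinity> then Phi_node x \<rho> \<mu> v \<sigma> k t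
      else real_of_ereal (\<alpha> k) / (eta_node x \<rho> \<mu> k + real_of_ereal (\<alpha> k)) * Phi_node x \<rho> \<mu> v \<sigma> k t)"

definition fric_diss :: "(nat \<Rightarrow> ereal) \<Rightarrow> (nat \<Rightarrow> real) \<Rightarrow> coef \<Rightarrow> coef \<Rightarrow> field \<Rightarrow> field \<Rightarrow> nat \<Rightarrow> real \<Rightarrow> real" where
  "fric_diss \<alpha> x \<rho> \<mu> v \<sigma> k t =
     (if \<alpha> k = \<infinity> then 0
      else real_of_ereal (\<alpha> k) / (eta_node x \<rho> \<mu> k + real_of_ereal (\<alpha> k))^2 * (Phi_node x \<rho> \<mu> v \<sigma> k t)^2)"

text \<open>Hat variables at the left end x k of element k (trace x_k^+) and at the right end
  x (k+1) of element k (trace x_{k+1}^-).\<close>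
definition vhat_left :: "real \<Rightarrow> (nat \<Rightarrow> ereal) \<Rightarrow> (nat \<Rightarrow> real) \<Rightarrow> coef \<Rightarrow> coef \<Rightarrow> field \<Rightarrow> field \<Rightarrow> nat \<Rightarrow> real \<Rightarrow> real" where
  "vhat_left r0 \<alpha> x \<rho> \<mu> v \<sigma> k t =
     (if k = 1 then (1 + r0) / Zs \<rho> \<mu> 1 (x 1) * p0 x \<rho> \<mu> v \<sigma> t
      else (2 * pp_node x \<rho> \<mu> v \<sigma> k t - sighat_node \<alpha> x \<rho> \<mu> v \<sigma> k t) / Zs \<rho> \<mu> k (x k))"

definition sighat_left :: "real \<Rightarrow> (nat \<Rightarrow> ereal) \<Rightarrow> (nat \<Rightarrow> real) \<Rightarrow> coef \<Rightarrow> coef \<Rightarrow> field \<Rightarrow> field \<Rightarrow> nat \<Rightarrow> real \<Rightarrow> real" where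
  "sighat_left r0 \<alpha> x \<rho> \<mu> v \<sigma> k t =
     (if k = 1 then (1 - r0) * p0 x \<rho> \<mu> v \<sigma> t
      else sighat_node \<alpha> x \<rho> \<mu> v \<sigma> k t)"

definition vhat_right :: "nat \<Rightarrow> real \<Rightarrow> (nat \<Rightarrow> ereal) \<Rightarrow> (nat \<Rightarrow> real) \<Rightarrow> coef \<Rightarrow> coef \<Rightarrow> field \<Rightarrow> field \<Rightarrow> nat \<Rightarrow> real \<Rightarrow> real" where
  "vhat_right K rL \<alpha> x \<rho> \<mu> v \<sigma> k t =
     (if k = K then (1 + rL) / Zs \<rho> \<mu> K (x (Suc K)) * qL K x \<rho> \<mu> v \<sigma> t
      else (2 * qm_node x \<rho> \<mu> v \<sigma> (Suc k) t + sighat_node \<alpha> x \<rho> \<mu> v \<sigma> (Suc k) t) / Zs \<rho> \<mu> k (x (Suc k)))"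

definition sighat_right :: "nat \<Rightarrow> real \<Rightarrow> (nat \<Rightarrow> ereal) \<Rightarrow> (nat \<Rightarrow> real) \<Rightarrow> coef \<Rightarrow> coef \<Rightarrow> field \<Rightarrow> field \<Rightarrow> nat \<Rightarrow> real \<Rightarrow> real" where
  "sighat_right K rL \<alpha> x \<rho> \<mu> v \<sigma> k t =
     (if k = K then - (1 - rL) * qL K x \<rho> \<mu> v \<sigma> t
      else sighat_node \<alpha> x \<rho> \<mu> v \<sigma> (Suc k) t)"

text \<open>Flux fluctuations: Fflux k t = F(x_k,t) (element k), Gflux k t = G(x_{k+1},t) (element k).\<close>
definition Fflux :: "real \<Rightarrow> (nat \<Rightarrow> ereal) \<Rightarrow> (nat \<Rightarrow> real) \<Rightarrow> coef \<Rightarrow> coef \<Rightarrow> field \<Rightarrow> field \<Rightarrow> nat \<Rightarrow> real \<Rightarrow> real" where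
  "Fflux r0 \<alpha> x \<rho> \<mu> v \<sigma> k t =
     Zs \<rho> \<mu> k (x k) / 2 * (v k (x k) t - vhat_left r0 \<alpha> x \<rho> \<mu> v \<sigma> k t)
     - (\<sigma> k (x k) t - sighat_left r0 \<alpha> x \<rho> \<mu> v \<sigma> k t) / 2"

definition Gflux :: "nat \<Rightarrow> real \<Rightarrow> (nat \<Rightarrow> ereal) \<Rightarrow> (nat \<Rightarrow> real) \<Rightarrow> coef \<Rightarrow> coef \<Rightarrow> field \<Rightarrow> field \<Rightarrow> nat \<Rightarrow> real \<Rightarrow> real" where
  "Gflux K rL \<alpha> x \<rho> \<mu> v \<sigma> k t =
     Zs \<rho> \<mu> k (x (Suc k)) / 2 * (v k (x (Suc k)) t - vhat_right K rL \<alpha> x \<rho> \<mu> v \<sigma> k t)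
     + (\<sigma> k (x (Suc k)) t - sighat_right K rL \<alpha> x \<rho> \<mu> v \<sigma> k t) / 2"

definition energy :: "nat \<Rightarrow> (nat \<Rightarrow> real) \<Rightarrow> coef \<Rightarrow> coef \<Rightarrow> field \<Rightarrow> field \<Rightarrow> real \<Rightarrow> real" where
  "energy K x \<rho> \<mu> v \<sigma> t =
     (\<Sum>k=1..K. 1/2 * integral {x k..x (Suc k)} (\<lambda>y. \<rho> k y * (v k y t)^2 + (\<sigma> k y t)^2 / \<mu> k y))"

end

theory Submission
  imports Defs
begin

text \<open>Testing the two weak forms with the solution itself and integrating
  \<open>v * \<sigma>x + \<sigma> * vx\<close> by parts on each element reduces \<open>dE/dt\<close> to trace terms.
  At every element end the hat states carry the same outgoing characteristic as the
  trace, so the penalty turns the trace work \<open>v * \<sigma>\<close> into the work \<open>vh * sh\<close> of the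
  hat states, minus \<open>F\<^sup>2 / Z\<close> (resp. \<open>G\<^sup>2 / Z\<close>). Summed over the elements these works
  telescope: an interior node leaves \<open>sh * (vh\<^sup>- - vh\<^sup>+) = sh * (sh - \<Phi>) / \<eta>\<close>, which
  the friction law turns into \<open>- \<alpha> / (\<eta> + \<alpha>)\<^sup>2 * \<Phi>\<^sup>2\<close>, and by the reflection
  conditions the external boundaries leave \<open>- (1 - r\<^sup>2) / Z * p\<^sup>2\<close>.\<close>

lemma left_trace_power:
  fixes Z v s vh sh F :: real
  assumes "Z \<noteq> 0" and "Z * vh + sh = Z * v + s" and "F = Z / 2 * (v - vh) - (s - sh) / 2"
  shows "- v * s - v * F + s * F / Z = - vh * sh - F\<^sup>2 / Z"
proof -
  have F: "F = sh - s" and vh: "vh = v - F / Z"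
    using assms by (simp_all add: field_simps)
  show ?thesis unfolding vh F using assms(1) by (simp add: field_simps power2_eq_square)
qed

lemma right_trace_power:
  fixes Z v s vh sh G :: real
  assumes "Z \<noteq> 0" and "Z * vh - sh = Z * v - s" and "G = Z / 2 * (v - vh) + (s - sh) / 2"
  shows "v * s - v * G - s * G / Z = vh * sh - G\<^sup>2 / Z"
proof -
  have G: "G = s - sh" and vh: "vh = v - G / Z"
    using assms by (simp_all add: field_simps)
  show ?thesis unfolding vh G using assms(1) by (simp add: field_simps power2_eq_square)
qed

lemma interface_power:
  fixes Zm Zp q p sh \<eta> \<Phi> :: real
  assumes "Zm > 0" and "Zp > 0"
    and \<eta>: "\<eta> = Zm * Zp / (Zm + Zp)" and \<Phi>: "\<Phi> = \<eta> * (2 / Zp * p - 2 / Zm * q)"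
  shows "(2 * q + sh) / Zm * sh - (2 * p - sh) / Zp * sh = sh * (sh - \<Phi>) / \<eta>"
proof -
  have inv_\<eta>: "1 / \<eta> = 1 / Zm + 1 / Zp" and "\<eta> \<noteq> 0"
    unfolding \<eta> using assms(1,2) by (simp_all add: field_simps)
  then have "sh * (sh - \<Phi>) / \<eta> = sh * sh * (1 / \<eta>) - sh * (2 / Zp * p - 2 / Zm * q)"
    unfolding \<Phi> by (simp add: field_simps)
  also have "\<dots> = (2 * q + sh) / Zm * sh - (2 * p - sh) / Zp * sh"
    unfolding inv_\<eta> using assms(1,2) by (simp add: field_simps)
  finally show ?thesis ..
qed

lemma friction_power:
  fixes \<eta> a \<Phi> :: real
  assumes "\<eta> > 0" and "a \<ge> 0"
  shows "a / (\<eta> + a) * \<Phi> * (a / (\<eta> + a) * \<Phi> - \<Phi>) / \<eta> = - (a / (\<eta> + a)\<^sup>2 * \<Phi>\<^sup>2)"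
proof -
  have "a / (\<eta> + a) * \<Phi> - \<Phi> = - (\<eta> / (\<eta> + a) * \<Phi>)"
    using assms by (simp add: field_simps)
  then show ?thesis using assms by (simp add: power2_eq_square)
qed

lemma sum_telescope_interfaces:
  fixes R L :: "nat \<Rightarrow> 'a::ab_group_add"
  assumes "1 \<le> K"
  shows "(\<Sum>k=1..K. R k - L k) = R K - L 1 + (\<Sum>k=2..K. R (k - 1) - L k)"
  using assms
proof (induction K rule: dec_induct)
  case base
  then show ?case by simp
next
  case (step K)
  then show ?case by (simp add: sum.atLeast_Suc_atMost_Suc_shift algebra_simps)
qed

lemma left_trace_characteristic:
  assumes "Zs \<rho> \<mu> k (x k) \<noteq> 0"
  shows "Zs \<rho> \<mu> k (x k) * vhat_left r0 \<alpha> x \<rho> \<mu> v \<sigma> k t + sighat_left r0 \<alpha> x \<rho> \<mu> v \<sigma> k t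
    = Zs \<rho> \<mu> k (x k) * v k (x k) t + \<sigma> k (x k) t"
  using assms
  by (auto simp: vhat_left_def sighat_left_def p0_def pp_node_def pplus_def field_simps)

lemma right_trace_characteristic:
  assumes "Zs \<rho> \<mu> k (x (Suc k)) \<noteq> 0"
  shows "Zs \<rho> \<mu> k (x (Suc k)) * vhat_right K rL \<alpha> x \<rho> \<mu> v \<sigma> k t - sighat_right K rL \<alpha> x \<rho> \<mu> v \<sigma> k t
    = Zs \<rho> \<mu> k (x (Suc k)) * v k (x (Suc k)) t - \<sigma> k (x (Suc k)) t"
  using assms
  by (auto simp: vhat_right_def sighat_right_def qL_def qm_node_def qminus_def field_simps)

lemma Fflux_power:
  assumes "Zs \<rho> \<mu> k (x k) \<noteq> 0"
  shows "- v k (x k) t * \<sigma> k (x k) t - v k (x k) t * Fflux r0 \<alpha> x \<rho> \<mu> v \<sigma> k t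
      + \<sigma> k (x k) t * Fflux r0 \<alpha> x \<rho> \<mu> v \<sigma> k t / Zs \<rho> \<mu> k (x k)
    = - vhat_left r0 \<alpha> x \<rho> \<mu> v \<sigma> k t * sighat_left r0 \<alpha> x \<rho> \<mu> v \<sigma> k t
      - (Fflux r0 \<alpha> x \<rho> \<mu> v \<sigma> k t)\<^sup>2 / Zs \<rho> \<mu> k (x k)"
  by (rule left_trace_power[OF assms left_trace_characteristic[of \<rho> \<mu> k x, OF assms]]) (simp add: Fflux_def)

lemma Gflux_power:
  assumes "Zs \<rho> \<mu> k (x (Suc k)) \<noteq> 0"
  shows "v k (x (Suc k)) t * \<sigma> k (x (Suc k)) t - v k (x (Suc k)) t * Gflux K rL \<alpha> x \<rho> \<mu> v \<sigma> k t
      - \<sigma> k (x (Suc k)) t * Gflux K rL \<alpha> x \<rho> \<mu> v \<sigma> k t / Zs \<rho> \<mu> k (x (Suc k))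
    = vhat_right K rL \<alpha> x \<rho> \<mu> v \<sigma> k t * sighat_right K rL \<alpha> x \<rho> \<mu> v \<sigma> k t
      - (Gflux K rL \<alpha> x \<rho> \<mu> v \<sigma> k t)\<^sup>2 / Zs \<rho> \<mu> k (x (Suc k))"
  by (rule right_trace_power[OF assms right_trace_characteristic[of \<rho> \<mu> k x, OF assms]]) (simp add: Gflux_def)

lemma left_boundary_power:
  "vhat_left r0 \<alpha> x \<rho> \<mu> v \<sigma> 1 t * sighat_left r0 \<alpha> x \<rho> \<mu> v \<sigma> 1 t
    = (1 - r0\<^sup>2) / Zs \<rho> \<mu> 1 (x 1) * (p0 x \<rho> \<mu> v \<sigma> t)\<^sup>2"
  by (simp add: vhat_left_def sighat_left_def field_simps power2_eq_square)

lemma right_boundary_power: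
  "vhat_right K rL \<alpha> x \<rho> \<mu> v \<sigma> K t * sighat_right K rL \<alpha> x \<rho> \<mu> v \<sigma> K t
    = - ((1 - rL\<^sup>2) / Zs \<rho> \<mu> K (x (Suc K)) * (qL K x \<rho> \<mu> v \<sigma> t)\<^sup>2)"
  by (simp add: vhat_right_def sighat_right_def power2_eq_square minus_divide_left algebra_simps)

lemma eta_node_pos:
  assumes "Zs \<rho> \<mu> (k - 1) (x k) > 0" and "Zs \<rho> \<mu> k (x k) > 0"
  shows "eta_node x \<rho> \<mu> k > 0"
  using assms by (simp add: eta_node_def)

lemma interface_node_power:
  assumes "2 \<le> k" and "k \<le> K"
    and Zm: "Zs \<rho> \<mu> (k - 1) (x k) > 0" and Zp: "Zs \<rho> \<mu> k (x k) > 0" and "\<alpha> k \<ge> 0"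
  shows "vhat_right K rL \<alpha> x \<rho> \<mu> v \<sigma> (k - 1) t * sighat_right K rL \<alpha> x \<rho> \<mu> v \<sigma> (k - 1) t
      - vhat_left r0 \<alpha> x \<rho> \<mu> v \<sigma> k t * sighat_left r0 \<alpha> x \<rho> \<mu> v \<sigma> k t
    = - fric_diss \<alpha> x \<rho> \<mu> v \<sigma> k t"
proof -
  let ?sh = "sighat_node \<alpha> x \<rho> \<mu> v \<sigma> k t"
  let ?\<Phi> = "Phi_node x \<rho> \<mu> v \<sigma> k t"
  let ?\<eta> = "eta_node x \<rho> \<mu> k"
  have "k - 1 \<noteq> K" "k \<noteq> 1" "Suc (k - 1) = k" using assms(1,2) by auto
  then have "vhat_right K rL \<alpha> x \<rho> \<mu> v \<sigma> (k - 1) t * sighat_right K rL \<alpha> x \<rho> \<mu> v \<sigma> (k - 1) t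
      - vhat_left r0 \<alpha> x \<rho> \<mu> v \<sigma> k t * sighat_left r0 \<alpha> x \<rho> \<mu> v \<sigma> k t
    = (2 * qm_node x \<rho> \<mu> v \<sigma> k t + ?sh) / Zs \<rho> \<mu> (k - 1) (x k) * ?sh
      - (2 * pp_node x \<rho> \<mu> v \<sigma> k t - ?sh) / Zs \<rho> \<mu> k (x k) * ?sh"
    by (simp add: vhat_right_def sighat_right_def vhat_left_def sighat_left_def)
  also have "\<dots> = ?sh * (?sh - ?\<Phi>) / ?\<eta>"
    by (rule interface_power[OF Zm Zp]) (simp_all add: eta_node_def Phi_node_def)
  also have "\<dots> = - fric_diss \<alpha> x \<rho> \<mu> v \<sigma> k t"
  proof (cases "\<alpha> k = \<infinity>")
    case False
    have "real_of_ereal (\<alpha> k) \<ge> 0" using \<open>\<alpha> k \<ge> 0\<close> by (simp add: real_of_ereal_pos)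
    with False friction_power[OF eta_node_pos[of \<rho> \<mu> k x, OF Zm Zp]] show ?thesis
      by (simp add: sighat_node_def fric_diss_def)
  qed (simp add: sighat_node_def fric_diss_def)
  finally show ?thesis .
qed

lemma fric_diss_nonneg:
  assumes "Zs \<rho> \<mu> (k - 1) (x k) > 0" and "Zs \<rho> \<mu> k (x k) > 0" and "\<alpha> k \<ge> 0"
  shows "fric_diss \<alpha> x \<rho> \<mu> v \<sigma> k t \<ge> 0"
  using eta_node_pos[of \<rho> \<mu> k x, OF assms(1,2)] real_of_ereal_pos[OF assms(3)]
  by (simp add: fric_diss_def)

lemma continuous_on_slice:
  assumes "continuous_on (A \<times> B) (\<lambda>(y, t). f y t)" and "t \<in> B"
  shows "continuous_on A (\<lambda>y. f y t)"
proof -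
  have "continuous_on A (\<lambda>y. (\<lambda>(y, t). f y t) (y, t))"
    by (rule continuous_on_compose2[OF assms(1)]) (use assms(2) in \<open>auto intro!: continuous_intros\<close>)
  then show ?thesis by simp
qed

lemma continuous_on_swap:
  assumes "continuous_on (A \<times> B) (\<lambda>(y, t). f y t)"
  shows "continuous_on (B \<times> A) (\<lambda>p. f (snd p) (fst p))"
proof -
  have "continuous_on (B \<times> A) (\<lambda>p. (\<lambda>(y, t). f y t) (snd p, fst p))"
    by (rule continuous_on_compose2[OF assms(1)]) (auto intro!: continuous_intros)
  then show ?thesis by simp
qed

lemma C1_on_imp_continuous_on: "C1_on S f \<Longrightarrow> continuous_on S f"
  unfolding C1_on_def by (metis DERIV_continuous_on)

lemma elem_C1_slice_C1_on:
  assumes "elem_C1 a b f fx ft" and "t \<ge> 0"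
  shows "C1_on {a..b} (\<lambda>y. f y t)"
  using assms continuous_on_slice[of "{a..b}" "{0..}" fx t]
  unfolding elem_C1_def C1_on_def by (intro exI[of _ "\<lambda>y. fx y t"]) auto

lemma integral_energy_density_has_derivative:
  fixes \<rho> \<mu> :: "real \<Rightarrow> real" and v \<sigma> vx vt \<sigma>x \<sigma>t :: "real \<Rightarrow> real \<Rightarrow> real"
  assumes ev: "elem_C1 a b v vx vt" and es: "elem_C1 a b \<sigma> \<sigma>x \<sigma>t"
    and \<rho>: "continuous_on {a..b} \<rho>" and \<mu>: "continuous_on {a..b} \<mu>"
    and \<mu>_pos: "\<forall>y\<in>{a..b}. \<mu> y > 0" and "t \<ge> 0"
  shows "((\<lambda>s. integral {a..b} (\<lambda>y. \<rho> y * (v y s)\<^sup>2 + (\<sigma> y s)\<^sup>2 / \<mu> y)) has_real_derivative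
      integral {a..b} (\<lambda>y. \<rho> y * (2 * v y t * vt y t) + 2 * \<sigma> y t * \<sigma>t y t / \<mu> y)) (at t within {0..})"
proof -
  have "((\<lambda>s. integral (cbox a b) (\<lambda>y. \<rho> y * (v y s)\<^sup>2 + (\<sigma> y s)\<^sup>2 / \<mu> y)) has_real_derivative
      integral (cbox a b) (\<lambda>y. \<rho> y * (2 * v y t * vt y t) + 2 * \<sigma> y t * \<sigma>t y t / \<mu> y)) (at t within {0..})"
  proof (rule leibniz_rule_field_derivative
      [where fx = "\<lambda>s y. \<rho> y * (2 * v y s * vt y s) + 2 * \<sigma> y s * \<sigma>t y s / \<mu> y"])
    fix s y assume "s \<in> {0::real..}" and y: "y \<in> cbox a b"
    then have "((\<lambda>s. v y s) has_real_derivative vt y s) (at s within {0..})"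
      and "((\<lambda>s. \<sigma> y s) has_real_derivative \<sigma>t y s) (at s within {0..})"
      using ev es by (auto simp: elem_C1_def)
    moreover have "\<mu> y \<noteq> 0" using \<mu>_pos y by force
    ultimately show "((\<lambda>s. \<rho> y * (v y s)\<^sup>2 + (\<sigma> y s)\<^sup>2 / \<mu> y) has_real_derivative
        \<rho> y * (2 * v y s * vt y s) + 2 * \<sigma> y s * \<sigma>t y s / \<mu> y) (at s within {0..})"
      by (auto intro!: derivative_eq_intros)
  next
    fix s :: real assume "s \<in> {0..}"
    then have "continuous_on {a..b} (\<lambda>y. \<rho> y * (v y s)\<^sup>2 + (\<sigma> y s)\<^sup>2 / \<mu> y)"
      using ev es \<rho> \<mu> \<mu>_pos continuous_on_slice[of "{a..b}" "{0..}" v s]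
        continuous_on_slice[of "{a..b}" "{0..}" \<sigma> s]
      by (auto simp: elem_C1_def intro!: continuous_intros)
    then show "(\<lambda>y. \<rho> y * (v y s)\<^sup>2 + (\<sigma> y s)\<^sup>2 / \<mu> y) integrable_on cbox a b"
      by (simp add: integrable_continuous_interval)
  next
    have "continuous_on ({0..} \<times> {a..b}) (\<lambda>p. \<rho> (snd p))"
      and "continuous_on ({0..} \<times> {a..b}) (\<lambda>p. \<mu> (snd p))"
      by (auto intro!: continuous_on_compose2[OF \<rho>] continuous_on_compose2[OF \<mu>] continuous_intros)
    then show "continuous_on ({0..} \<times> cbox a b)
        (\<lambda>(s, y). \<rho> y * (2 * v y s * vt y s) + 2 * \<sigma> y s * \<sigma>t y s / \<mu> y)"
      using ev es \<mu>_pos continuous_on_swap[of "{a..b}" "{0..}" v] continuous_on_swap[of "{a..b}" "{0..}" vt]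
        continuous_on_swap[of "{a..b}" "{0..}" \<sigma>] continuous_on_swap[of "{a..b}" "{0..}" \<sigma>t]
      unfolding elem_C1_def cbox_interval case_prod_beta'
      by (auto intro!: continuous_intros)
  qed (use \<open>t \<ge> 0\<close> in auto)
  then show ?thesis by (simp add: cbox_interval)
qed

lemma integral_energy_rate_by_parts:
  fixes \<rho> \<mu> :: "real \<Rightarrow> real" and v \<sigma> vx vt \<sigma>x \<sigma>t :: "real \<Rightarrow> real \<Rightarrow> real"
  assumes ev: "elem_C1 a b v vx vt" and es: "elem_C1 a b \<sigma> \<sigma>x \<sigma>t"
    and \<rho>: "continuous_on {a..b} \<rho>" and \<mu>: "continuous_on {a..b} \<mu>"
    and \<mu>_pos: "\<forall>y\<in>{a..b}. \<mu> y > 0" and "a \<le> b" and "t \<ge> 0"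
  shows "1/2 * integral {a..b} (\<lambda>y. \<rho> y * (2 * v y t * vt y t) + 2 * \<sigma> y t * \<sigma>t y t / \<mu> y)
    = integral {a..b} (\<lambda>y. \<rho> y * v y t * vt y t - v y t * \<sigma>x y t)
      + integral {a..b} (\<lambda>y. \<sigma> y t * \<sigma>t y t / \<mu> y - \<sigma> y t * vx y t)
      + (v b t * \<sigma> b t - v a t * \<sigma> a t)"
proof -
  have cont: "continuous_on {a..b} (\<lambda>y. g y t)" if "elem_C1 a b f fx ft" "g \<in> {f, fx, ft}"
    for f fx ft g
    using that \<open>t \<ge> 0\<close> continuous_on_slice[of "{a..b}" "{0..}" g t] by (auto simp: elem_C1_def)
  have "((\<lambda>y. \<rho> y * v y t * vt y t - v y t * \<sigma>x y t) has_integral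
      integral {a..b} (\<lambda>y. \<rho> y * v y t * vt y t - v y t * \<sigma>x y t)) {a..b}"
    using cont[OF ev] cont[OF es] \<rho>
    by (intro integrable_integral integrable_continuous_interval) (auto intro!: continuous_intros)
  moreover have "((\<lambda>y. \<sigma> y t * \<sigma>t y t / \<mu> y - \<sigma> y t * vx y t) has_integral
      integral {a..b} (\<lambda>y. \<sigma> y t * \<sigma>t y t / \<mu> y - \<sigma> y t * vx y t)) {a..b}"
    using cont[OF ev] cont[OF es] \<mu> \<mu>_pos
    by (intro integrable_integral integrable_continuous_interval) (auto intro!: continuous_intros)
  moreover have "((\<lambda>y. v y t * \<sigma>x y t + vx y t * \<sigma> y t) has_integral
      (v b t * \<sigma> b t - v a t * \<sigma> a t)) {a..b}"
  proof (rule fundamental_theorem_of_calculus[OF \<open>a \<le> b\<close>])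
    fix y assume "y \<in> {a..b}"
    then have "((\<lambda>y. v y t) has_real_derivative vx y t) (at y within {a..b})"
      and "((\<lambda>y. \<sigma> y t) has_real_derivative \<sigma>x y t) (at y within {a..b})"
      using ev es \<open>t \<ge> 0\<close> by (auto simp: elem_C1_def)
    then show "((\<lambda>y. v y t * \<sigma> y t) has_vector_derivative v y t * \<sigma>x y t + vx y t * \<sigma> y t)
        (at y within {a..b})"
      by (auto simp: has_real_derivative_iff_has_vector_derivative[symmetric]
          intro!: derivative_eq_intros)
  qed
  ultimately have "((\<lambda>y. 1/2 * (\<rho> y * (2 * v y t * vt y t) + 2 * \<sigma> y t * \<sigma>t y t / \<mu> y)) has_integral
      integral {a..b} (\<lambda>y. \<rho> y * v y t * vt y t - v y t * \<sigma>x y t)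
      + integral {a..b} (\<lambda>y. \<sigma> y t * \<sigma>t y t / \<mu> y - \<sigma> y t * vx y t)
      + (v b t * \<sigma> b t - v a t * \<sigma> a t)) {a..b}"
    by (rule has_integral_eq[rotated, OF has_integral_add[OF has_integral_add]]) (simp add: algebra_simps)
  then show ?thesis
    by (simp only: integral_mult_right[symmetric] integral_unique)
qed

lemma element_energy_rate:
  fixes \<rho> \<mu> :: "real \<Rightarrow> real" and v \<sigma> vx vt \<sigma>x \<sigma>t :: "real \<Rightarrow> real \<Rightarrow> real"
  assumes "elem_C1 a b v vx vt" and "elem_C1 a b \<sigma> \<sigma>x \<sigma>t"
    and "continuous_on {a..b} \<rho>" and "continuous_on {a..b} \<mu>"
    and "\<forall>y\<in>{a..b}. \<mu> y > 0" and "a \<le> b" and "t \<ge> 0"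
  shows "((\<lambda>s. 1/2 * integral {a..b} (\<lambda>y. \<rho> y * (v y s)\<^sup>2 + (\<sigma> y s)\<^sup>2 / \<mu> y)) has_real_derivative
      integral {a..b} (\<lambda>y. \<rho> y * v y t * vt y t - v y t * \<sigma>x y t)
      + integral {a..b} (\<lambda>y. \<sigma> y t * \<sigma>t y t / \<mu> y - \<sigma> y t * vx y t)
      + (v b t * \<sigma> b t - v a t * \<sigma> a t)) (at t within {0..})"
  using DERIV_cmult[OF integral_energy_density_has_derivative[OF assms(1-5,7)], of "1/2"]
  by (simp only: integral_energy_rate_by_parts[OF assms])

lemma energy_rate_eq_trace_power:
  fixes \<rho> \<mu> :: coef and v \<sigma> vx vt \<sigma>x \<sigma>t :: field
  assumes xle: "\<forall>k\<in>{1..K}. x k \<le> x (Suc k)"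
    and Z: "\<forall>k\<in>{1..K}. Zs \<rho> \<mu> k (x k) > 0 \<and> Zs \<rho> \<mu> k (x (Suc k)) > 0"
    and \<rho>: "\<forall>k\<in>{1..K}. continuous_on {x k..x (Suc k)} (\<rho> k)"
    and \<mu>: "\<forall>k\<in>{1..K}. continuous_on {x k..x (Suc k)} (\<mu> k)"
    and \<mu>_pos: "\<forall>k\<in>{1..K}. \<forall>y\<in>{x k..x (Suc k)}. \<mu> k y > 0"
    and v_C1: "\<forall>k\<in>{1..K}. elem_C1 (x k) (x (Suc k)) (v k) (vx k) (vt k)"
    and \<sigma>_C1: "\<forall>k\<in>{1..K}. elem_C1 (x k) (x (Suc k)) (\<sigma> k) (\<sigma>x k) (\<sigma>t k)"
    and t: "t \<ge> 0"
    and weak_v: "\<forall>\<phi>v :: nat \<Rightarrow> real \<Rightarrow> real.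
        (\<forall>k\<in>{1..K}. C1_on {x k..x (Suc k)} (\<phi>v k)) \<longrightarrow>
        (\<Sum>k=1..K. integral {x k..x (Suc k)} (\<lambda>y. \<rho> k y * \<phi>v k y * vt k y t - \<phi>v k y * \<sigma>x k y t)
            + \<phi>v k (x k) * Fflux r0 \<alpha> x \<rho> \<mu> v \<sigma> k t
            + \<phi>v k (x (Suc k)) * Gflux K rL \<alpha> x \<rho> \<mu> v \<sigma> k t) = 0"
    and weak_\<sigma>: "\<forall>\<phi>s :: nat \<Rightarrow> real \<Rightarrow> real.
        (\<forall>k\<in>{1..K}. C1_on {x k..x (Suc k)} (\<phi>s k)) \<longrightarrow>
        (\<Sum>k=1..K. integral {x k..x (Suc k)} (\<lambda>y. \<phi>s k y * \<sigma>t k y t / \<mu> k y - \<phi>s k y * vx k y t)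
            - \<phi>s k (x k) / Zs \<rho> \<mu> k (x k) * Fflux r0 \<alpha> x \<rho> \<mu> v \<sigma> k t
            + \<phi>s k (x (Suc k)) / Zs \<rho> \<mu> k (x (Suc k)) * Gflux K rL \<alpha> x \<rho> \<mu> v \<sigma> k t) = 0"
  shows "((\<lambda>s. energy K x \<rho> \<mu> v \<sigma> s) has_real_derivative
      (\<Sum>k=1..K. vhat_right K rL \<alpha> x \<rho> \<mu> v \<sigma> k t * sighat_right K rL \<alpha> x \<rho> \<mu> v \<sigma> k t
                - vhat_left r0 \<alpha> x \<rho> \<mu> v \<sigma> k t * sighat_left r0 \<alpha> x \<rho> \<mu> v \<sigma> k t)
      - (\<Sum>k=1..K. (Fflux r0 \<alpha> x \<rho> \<mu> v \<sigma> k t)\<^sup>2 / Zs \<rho> \<mu> k (x k)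
                + (Gflux K rL \<alpha> x \<rho> \<mu> v \<sigma> k t)\<^sup>2 / Zs \<rho> \<mu> k (x (Suc k))))
    (at t within {0..})"
proof -
  define F where "F k = Fflux r0 \<alpha> x \<rho> \<mu> v \<sigma> k t" for k
  define G where "G k = Gflux K rL \<alpha> x \<rho> \<mu> v \<sigma> k t" for k
  define Za where "Za k = Zs \<rho> \<mu> k (x k)" for k
  define Zb where "Zb k = Zs \<rho> \<mu> k (x (Suc k))" for k
  define I1 where "I1 k = integral {x k..x (Suc k)} (\<lambda>y. \<rho> k y * v k y t * vt k y t - v k y t * \<sigma>x k y t)" for k
  define I2 where "I2 k = integral {x k..x (Suc k)} (\<lambda>y. \<sigma> k y t * \<sigma>t k y t / \<mu> k y - \<sigma> k y t * vx k y t)" for k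
  define PL where "PL k = vhat_left r0 \<alpha> x \<rho> \<mu> v \<sigma> k t * sighat_left r0 \<alpha> x \<rho> \<mu> v \<sigma> k t" for k
  define PR where "PR k = vhat_right K rL \<alpha> x \<rho> \<mu> v \<sigma> k t * sighat_right K rL \<alpha> x \<rho> \<mu> v \<sigma> k t" for k
  have "((\<lambda>s. energy K x \<rho> \<mu> v \<sigma> s) has_real_derivative
      (\<Sum>k=1..K. I1 k + I2 k + (v k (x (Suc k)) t * \<sigma> k (x (Suc k)) t - v k (x k) t * \<sigma> k (x k) t)))
    (at t within {0..})"
    unfolding energy_def I1_def I2_def using assms
    by (intro DERIV_sum element_energy_rate) (auto simp: C1_on_imp_continuous_on)
  moreover have "(\<Sum>k=1..K. I1 k + v k (x k) t * F k + v k (x (Suc k)) t * G k) = 0"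
    using weak_v[rule_format, of "\<lambda>k y. v k y t"] v_C1 elem_C1_slice_C1_on[OF _ t]
    unfolding I1_def F_def G_def by blast
  moreover have "(\<Sum>k=1..K. I2 k - \<sigma> k (x k) t / Za k * F k + \<sigma> k (x (Suc k)) t / Zb k * G k) = 0"
    using weak_\<sigma>[rule_format, of "\<lambda>k y. \<sigma> k y t"] \<sigma>_C1 elem_C1_slice_C1_on[OF _ t]
    unfolding I2_def F_def G_def Za_def Zb_def by blast
  moreover have "I1 k + I2 k + (v k (x (Suc k)) t * \<sigma> k (x (Suc k)) t - v k (x k) t * \<sigma> k (x k) t)
      = (I1 k + v k (x k) t * F k + v k (x (Suc k)) t * G k)
      + (I2 k - \<sigma> k (x k) t / Za k * F k + \<sigma> k (x (Suc k)) t / Zb k * G k)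
      + (PR k - PL k) - ((F k)\<^sup>2 / Za k + (G k)\<^sup>2 / Zb k)" if "k \<in> {1..K}" for k
  proof -
    have "Zs \<rho> \<mu> k (x k) \<noteq> 0" and "Zs \<rho> \<mu> k (x (Suc k)) \<noteq> 0" using bspec[OF Z that] by auto
    from Fflux_power[of \<rho> \<mu> k x v t \<sigma> r0 \<alpha>, OF this(1)] Gflux_power[of \<rho> \<mu> k x v t \<sigma> K rL \<alpha>, OF this(2)]
    show ?thesis unfolding F_def G_def Za_def Zb_def PL_def PR_def by (simp add: algebra_simps)
  qed
  ultimately show ?thesis
    unfolding F_def G_def Za_def Zb_def PL_def PR_def
    by (simp add: sum.distrib sum_subtractf)
qed

lemma total_trace_power:
  assumes "1 \<le> K"
    and Z: "\<forall>k\<in>{2..K}. Zs \<rho> \<mu> (k - 1) (x k) > 0 \<and> Zs \<rho> \<mu> k (x k) > 0"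
    and \<alpha>: "\<forall>k\<in>{2..K}. \<alpha> k \<ge> 0"
  shows "(\<Sum>k=1..K. vhat_right K rL \<alpha> x \<rho> \<mu> v \<sigma> k t * sighat_right K rL \<alpha> x \<rho> \<mu> v \<sigma> k t
                - vhat_left r0 \<alpha> x \<rho> \<mu> v \<sigma> k t * sighat_left r0 \<alpha> x \<rho> \<mu> v \<sigma> k t)
    = - (\<Sum>k=2..K. fric_diss \<alpha> x \<rho> \<mu> v \<sigma> k t)
      - (1 - r0\<^sup>2) / Zs \<rho> \<mu> 1 (x 1) * (p0 x \<rho> \<mu> v \<sigma> t)\<^sup>2
      - (1 - rL\<^sup>2) / Zs \<rho> \<mu> K (x (Suc K)) * (qL K x \<rho> \<mu> v \<sigma> t)\<^sup>2"
proof -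
  have "vhat_right K rL \<alpha> x \<rho> \<mu> v \<sigma> (k - 1) t * sighat_right K rL \<alpha> x \<rho> \<mu> v \<sigma> (k - 1) t
      - vhat_left r0 \<alpha> x \<rho> \<mu> v \<sigma> k t * sighat_left r0 \<alpha> x \<rho> \<mu> v \<sigma> k t
    = - fric_diss \<alpha> x \<rho> \<mu> v \<sigma> k t" if k: "k \<in> {2..K}" for k
    using k Z \<alpha> by (intro interface_node_power) auto
  then have "(\<Sum>k=2..K. vhat_right K rL \<alpha> x \<rho> \<mu> v \<sigma> (k - 1) t * sighat_right K rL \<alpha> x \<rho> \<mu> v \<sigma> (k - 1) t
      - vhat_left r0 \<alpha> x \<rho> \<mu> v \<sigma> k t * sighat_left r0 \<alpha> x \<rho> \<mu> v \<sigma> k t)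
    = - (\<Sum>k=2..K. fric_diss \<alpha> x \<rho> \<mu> v \<sigma> k t)"
    by (simp add: sum_negf)
  then show ?thesis
    using left_boundary_power[of r0 \<alpha> x \<rho> \<mu> v \<sigma> t] right_boundary_power[of K rL \<alpha> x \<rho> \<mu> v \<sigma> t]
    by (subst sum_telescope_interfaces[OF \<open>1 \<le> K\<close>]) linarith
qed

theorem theorem1:
  fixes K :: nat and L r0 rL :: real and x :: "nat \<Rightarrow> real"
    and \<rho> \<mu> :: "nat \<Rightarrow> real \<Rightarrow> real"
    and v \<sigma> vx vt \<sigma>x \<sigma>t :: "nat \<Rightarrow> real \<Rightarrow> real \<Rightarrow> real"
    and \<alpha> :: "nat \<Rightarrow> ereal"
  assumes K: "K \<ge> 1"
    and x1: "x 1 = 0" and xL: "x (Suc K) = L"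
    and xmono: "\<forall>k\<in>{1..K}. x k < x (Suc k)"
    and rho_pos: "\<forall>k\<in>{1..K}. \<forall>y\<in>{x k..x (Suc k)}. \<rho> k y > 0"
    and mu_pos: "\<forall>k\<in>{1..K}. \<forall>y\<in>{x k..x (Suc k)}. \<mu> k y > 0"
    and rho_C1: "\<forall>k\<in>{1..K}. C1_on {x k..x (Suc k)} (\<rho> k)"
    and mu_C1: "\<forall>k\<in>{1..K}. C1_on {x k..x (Suc k)} (\<mu> k)"
    and v_C1: "\<forall>k\<in>{1..K}. elem_C1 (x k) (x (Suc k)) (v k) (vx k) (vt k)"
    and sigma_C1: "\<forall>k\<in>{1..K}. elem_C1 (x k) (x (Suc k)) (\<sigma> k) (\<sigma>x k) (\<sigma>t k)"
    and r0: "-1 \<le> r0" "r0 \<le> 1" and rL: "-1 \<le> rL" "rL \<le> 1"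
    and alpha: "\<forall>k\<in>{2..K}. \<alpha> k \<ge> 0"
    and weak_v: "\<forall>t\<ge>0. \<forall>\<phi>v :: nat \<Rightarrow> real \<Rightarrow> real.
        (\<forall>k\<in>{1..K}. C1_on {x k..x (Suc k)} (\<phi>v k)) \<longrightarrow>
        (\<Sum>k=1..K. integral {x k..x (Suc k)} (\<lambda>y. \<rho> k y * \<phi>v k y * vt k y t - \<phi>v k y * \<sigma>x k y t)
            + \<phi>v k (x k) * Fflux r0 \<alpha> x \<rho> \<mu> v \<sigma> k t
            + \<phi>v k (x (Suc k)) * Gflux K rL \<alpha> x \<rho> \<mu> v \<sigma> k t) = 0"
    and weak_sigma: "\<forall>t\<ge>0. \<forall>\<phi>s :: nat \<Rightarrow> real \<Rightarrow> real.
        (\<forall>k\<in>{1..K}. C1_on {x k..x (Suc k)} (\<phi>s k)) \<longrightarrow>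
        (\<Sum>k=1..K. integral {x k..x (Suc k)} (\<lambda>y. \<phi>s k y * \<sigma>t k y t / \<mu> k y - \<phi>s k y * vx k y t)
            - \<phi>s k (x k) / Zs \<rho> \<mu> k (x k) * Fflux r0 \<alpha> x \<rho> \<mu> v \<sigma> k t
            + \<phi>s k (x (Suc k)) / Zs \<rho> \<mu> k (x (Suc k)) * Gflux K rL \<alpha> x \<rho> \<mu> v \<sigma> k t) = 0"
  shows "\<forall>t\<ge>0.
     (let dE = - (\<Sum>k=1..K. (Fflux r0 \<alpha> x \<rho> \<mu> v \<sigma> k t)^2 / Zs \<rho> \<mu> k (x k)
                          + (Gflux K rL \<alpha> x \<rho> \<mu> v \<sigma> k t)^2 / Zs \<rho> \<mu> k (x (Suc k)))
               - (\<Sum>k=2..K. fric_diss \<alpha> x \<rho> \<mu> v \<sigma> k t)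
               - (1 - r0^2) / Zs \<rho> \<mu> 1 (x 1) * (p0 x \<rho> \<mu> v \<sigma> t)^2
               - (1 - rL^2) / Zs \<rho> \<mu> K (x (Suc K)) * (qL K x \<rho> \<mu> v \<sigma> t)^2
      in ((\<lambda>s. energy K x \<rho> \<mu> v \<sigma> s) has_real_derivative dE) (at t within {0..}) \<and> dE \<le> 0)"
proof (intro allI impI)
  fix t :: real assume t: "t \<ge> 0"
  have xle: "\<forall>k\<in>{1..K}. x k \<le> x (Suc k)" using xmono by (simp add: less_imp_le)
  have Z: "\<forall>k\<in>{1..K}. Zs \<rho> \<mu> k (x k) > 0 \<and> Zs \<rho> \<mu> k (x (Suc k)) > 0"
    using rho_pos mu_pos xle by (simp add: Zs_def)
  have Z_interface: "\<forall>k\<in>{2..K}. Zs \<rho> \<mu> (k - 1) (x k) > 0 \<and> Zs \<rho> \<mu> k (x k) > 0"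
  proof
    fix k assume "k \<in> {2..K}"
    then have "k - 1 \<in> {1..K}" and "Suc (k - 1) = k" and "k \<in> {1..K}" by auto
    then show "Zs \<rho> \<mu> (k - 1) (x k) > 0 \<and> Zs \<rho> \<mu> k (x k) > 0"
      using Z by metis
  qed
  have "((\<lambda>s. energy K x \<rho> \<mu> v \<sigma> s) has_real_derivative
      - (\<Sum>k=2..K. fric_diss \<alpha> x \<rho> \<mu> v \<sigma> k t)
      - (1 - r0\<^sup>2) / Zs \<rho> \<mu> 1 (x 1) * (p0 x \<rho> \<mu> v \<sigma> t)\<^sup>2
      - (1 - rL\<^sup>2) / Zs \<rho> \<mu> K (x (Suc K)) * (qL K x \<rho> \<mu> v \<sigma> t)\<^sup>2
      - (\<Sum>k=1..K. (Fflux r0 \<alpha> x \<rho> \<mu> v \<sigma> k t)\<^sup>2 / Zs \<rho> \<mu> k (x k)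
                + (Gflux K rL \<alpha> x \<rho> \<mu> v \<sigma> k t)\<^sup>2 / Zs \<rho> \<mu> k (x (Suc k))))
    (at t within {0..})"
    using energy_rate_eq_trace_power[OF xle Z _ _ mu_pos v_C1 sigma_C1 t
        mp[OF spec[OF weak_v, of t] t] mp[OF spec[OF weak_sigma, of t] t]]
      rho_C1 mu_C1 C1_on_imp_continuous_on
    unfolding total_trace_power[OF K Z_interface alpha] by blast
  moreover have "0 \<le> (\<Sum>k=2..K. fric_diss \<alpha> x \<rho> \<mu> v \<sigma> k t)"
    using Z_interface alpha by (intro sum_nonneg fric_diss_nonneg) auto
  moreover have "0 \<le> (\<Sum>k=1..K. (Fflux r0 \<alpha> x \<rho> \<mu> v \<sigma> k t)\<^sup>2 / Zs \<rho> \<mu> k (x k)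
                + (Gflux K rL \<alpha> x \<rho> \<mu> v \<sigma> k t)\<^sup>2 / Zs \<rho> \<mu> k (x (Suc k)))"
    by (intro sum_nonneg add_nonneg_nonneg divide_nonneg_pos) (use Z in auto)
  moreover have "0 \<le> (1 - r0\<^sup>2) / Zs \<rho> \<mu> 1 (x 1) * (p0 x \<rho> \<mu> v \<sigma> t)\<^sup>2"
    and "0 \<le> (1 - rL\<^sup>2) / Zs \<rho> \<mu> K (x (Suc K)) * (qL K x \<rho> \<mu> v \<sigma> t)\<^sup>2"
    using bspec[OF Z, of 1] bspec[OF Z, of K] K r0 rL
    by (auto intro!: mult_nonneg_nonneg divide_nonneg_pos simp: abs_square_le_1 abs_le_iff)
  ultimately show "let dE = - (\<Sum>k=1..K. (Fflux r0 \<alpha> x \<rho> \<mu> v \<sigma> k t)^2 / Zs \<rho> \<mu> k (x k)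
                          + (Gflux K rL \<alpha> x \<rho> \<mu> v \<sigma> k t)^2 / Zs \<rho> \<mu> k (x (Suc k)))
               - (\<Sum>k=2..K. fric_diss \<alpha> x \<rho> \<mu> v \<sigma> k t)
               - (1 - r0^2) / Zs \<rho> \<mu> 1 (x 1) * (p0 x \<rho> \<mu> v \<sigma> t)^2
               - (1 - rL^2) / Zs \<rho> \<mu> K (x (Suc K)) * (qL K x \<rho> \<mu> v \<sigma> t)^2
      in ((\<lambda>s. energy K x \<rho> \<mu> v \<sigma> s) has_real_derivative dE) (at t within {0..}) \<and> dE \<le> 0"
    unfolding Let_def by (auto elim!: DERIV_cong)
qed

end
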